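(* Let $G$ be a group and $S$ a conjugation invariant generating set of $G$. Suppose $G$ has $m$ linearly independent homogeneous quasi-morphisms each of which is bounded on $S$. Then there is a quasi-isometric embedding of $\mathbb{Z}^m$ into the quotient graph $\mathrm{Cay}(G,S)/\mathrm{Inn}(G)$.
   Context: A quasi-morphism is a function $q:G\to\mathbb{R}$ with $\sup_{g,h}|q(gh)-q(g)-q(h)|<\infty$; it is homogeneous if $q(g^k)=kq(g)$ for all $g$ and $k\in\mathbb Z$. $\mathrm{Cay}(G,S)$ is the graph with vertex set $G$ and an undirected edge between $g$ and $sg$ for $g\in G$, $s\in S$. Since $S$ is conjugation invariant, $G$ acts on $\mathrm{Cay}(G,S)$ by graph automorphisms via conjugation $g\mapsto kgk^{-1}$. The quotient graph $\mathrm{Cay}(G,S)/\mathrm{Inn}(G)$ has as vertices the conjugacy classes of $G$, two classes being joined by an edge iff they have representatives joined by an edge in $\mathrm{Cay}(G,S)$; it carries the path metric with edges of length $1$. $\mathbb Z^m$ carries the $\ell^1$ metric. *)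

theory Defs
  imports "HOL-Algebra.Algebra"
begin

definition quasi_morphism :: "('a, 'b) monoid_scheme \<Rightarrow> ('a \<Rightarrow> real) \<Rightarrow> bool" where
  "quasi_morphism G q \<longleftrightarrow>
     (\<exists>D. \<forall>g\<in>carrier G. \<forall>h\<in>carrier G. \<bar>q (g \<otimes>\<^bsub>G\<^esub> h) - q g - q h\<bar> \<le> D)"

definition homogeneous_qm :: "('a, 'b) monoid_scheme \<Rightarrow> ('a \<Rightarrow> real) \<Rightarrow> bool" where
  "homogeneous_qm G q \<longleftrightarrow> quasi_morphism G q \<and>
     (\<forall>g\<in>carrier G. \<forall>k::int. q (g [^]\<^bsub>G\<^esub> k) = of_int k * q g)"

definition conj_invariant :: "('a, 'b) monoid_scheme \<Rightarrow> 'a set \<Rightarrow> bool" where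
  "conj_invariant G S \<longleftrightarrow>
     (\<forall>s\<in>S. \<forall>h\<in>carrier G. h \<otimes>\<^bsub>G\<^esub> s \<otimes>\<^bsub>G\<^esub> inv\<^bsub>G\<^esub> h \<in> S)"

definition conj_class :: "('a, 'b) monoid_scheme \<Rightarrow> 'a \<Rightarrow> 'a set" where
  "conj_class G g = {h \<otimes>\<^bsub>G\<^esub> g \<otimes>\<^bsub>G\<^esub> inv\<^bsub>G\<^esub> h | h. h \<in> carrier G}"

definition conj_classes :: "('a, 'b) monoid_scheme \<Rightarrow> 'a set set" where
  "conj_classes G = conj_class G ` carrier G"

text \<open>Edges of the quotient graph Cay(G,S)/Inn(G): two classes are adjacent iff they have
  representatives joined by an (undirected) edge g -- s g of the Cayley graph.\<close>
definition cq_adj :: "('a, 'b) monoid_scheme \<Rightarrow> 'a set \<Rightarrow> 'a set \<Rightarrow> 'a set \<Rightarrow> bool" where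
  "cq_adj G S C D \<longleftrightarrow> C \<in> conj_classes G \<and> D \<in> conj_classes G \<and>
     (\<exists>x\<in>C. \<exists>y\<in>D. \<exists>s\<in>S. y = s \<otimes>\<^bsub>G\<^esub> x \<or> x = s \<otimes>\<^bsub>G\<^esub> y)"

definition cq_dist :: "('a, 'b) monoid_scheme \<Rightarrow> 'a set \<Rightarrow> 'a set \<Rightarrow> 'a set \<Rightarrow> nat" where
  "cq_dist G S C D = (LEAST n. \<exists>p. p 0 = C \<and> p n = D \<and>
       (\<forall>i\<le>n. p i \<in> conj_classes G) \<and> (\<forall>i<n. cq_adj G S (p i) (p (Suc i))))"

text \<open>The l^1 metric on Z^m, points represented as functions {..<m} \<rightarrow> int.\<close>
definition l1_dist :: "nat \<Rightarrow> (nat \<Rightarrow> int) \<Rightarrow> (nat \<Rightarrow> int) \<Rightarrow> int" where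
  "l1_dist m x y = (\<Sum>i<m. \<bar>x i - y i\<bar>)"

definition Zm :: "nat \<Rightarrow> (nat \<Rightarrow> int) set" where
  "Zm m = {..<m} \<rightarrow>\<^sub>E (UNIV :: int set)"

end

theory Submission
  imports Defs
begin

text \<open>Choose g_1, ..., g_m in G and a matrix c with sum_i c_ki q_i(g_j) = delta_kj (possible by
  linear independence), and send x in Z^m to the conjugacy class of g_1^x_1 ... g_m^x_m.
  Since a class is unchanged by cyclic rotation of a product, changing one exponent by one moves
  the class a bounded number of edges, so the map is Lipschitz. Conversely, homogeneous
  quasi-morphisms are conjugation invariant, hence change by a bounded amount along each edge of
  the quotient graph; on the image of x the value of q_i is sum_j x_j q_i(g_j) up to a bounded
  error, and applying c recovers x - y from these values. This gives the lower bound.\<close>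

section \<open>Conjugacy classes\<close>

context group
begin

lemma inv_mult_cancel_left [simp]: "x \<in> carrier G \<Longrightarrow> y \<in> carrier G \<Longrightarrow> inv x \<otimes> (x \<otimes> y) = y"
  by (simp add: m_assoc[symmetric])

lemma mult_inv_cancel_left [simp]: "x \<in> carrier G \<Longrightarrow> y \<in> carrier G \<Longrightarrow> x \<otimes> (inv x \<otimes> y) = y"
  by (simp add: m_assoc[symmetric])

lemma conj_class_subset_carrier: "a \<in> carrier G \<Longrightarrow> conj_class G a \<subseteq> carrier G"
  unfolding conj_class_def by auto

lemma conj_class_self: "a \<in> carrier G \<Longrightarrow> a \<in> conj_class G a"
  unfolding conj_class_def by (auto intro!: exI[of _ \<one>])

lemma conj_class_in_conj_classes: "a \<in> carrier G \<Longrightarrow> conj_class G a \<in> conj_classes G"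
  unfolding conj_classes_def by auto

lemma conj_classes_subset_carrier: "C \<in> conj_classes G \<Longrightarrow> C \<subseteq> carrier G"
  unfolding conj_classes_def using conj_class_subset_carrier by auto

lemma conj_classes_nonempty: "C \<in> conj_classes G \<Longrightarrow> \<exists>a. a \<in> C"
  unfolding conj_classes_def using conj_class_self by auto

lemma conj_class_conjugate:
  assumes h: "h \<in> carrier G" and g: "g \<in> carrier G"
  shows "conj_class G (h \<otimes> g \<otimes> inv h) = conj_class G g"
proof
  show "conj_class G (h \<otimes> g \<otimes> inv h) \<subseteq> conj_class G g"
  proof
    fix z assume "z \<in> conj_class G (h \<otimes> g \<otimes> inv h)"
    then obtain k where k: "k \<in> carrier G" "z = k \<otimes> (h \<otimes> g \<otimes> inv h) \<otimes> inv k"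
      unfolding conj_class_def by auto
    then have "z = (k \<otimes> h) \<otimes> g \<otimes> inv (k \<otimes> h)"
      using h g by (simp add: m_assoc inv_mult_group)
    then show "z \<in> conj_class G g"
      unfolding conj_class_def using k h by blast
  qed
next
  show "conj_class G g \<subseteq> conj_class G (h \<otimes> g \<otimes> inv h)"
  proof
    fix z assume "z \<in> conj_class G g"
    then obtain k where k: "k \<in> carrier G" "z = k \<otimes> g \<otimes> inv k"
      unfolding conj_class_def by auto
    then have "z = (k \<otimes> inv h) \<otimes> (h \<otimes> g \<otimes> inv h) \<otimes> inv (k \<otimes> inv h)"
      using h g by (simp add: m_assoc inv_mult_group)
    then show "z \<in> conj_class G (h \<otimes> g \<otimes> inv h)"
      unfolding conj_class_def using k h by blast
  qed
qed

lemma conj_class_mult_commute: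
  assumes "a \<in> carrier G" "b \<in> carrier G"
  shows "conj_class G (a \<otimes> b) = conj_class G (b \<otimes> a)"
proof -
  have "b \<otimes> a = inv a \<otimes> (a \<otimes> b) \<otimes> inv (inv a)"
    using assms by (simp add: m_assoc)
  then show ?thesis
    using conj_class_conjugate[of "inv a" "a \<otimes> b"] assms by simp
qed

lemma nat_pow_conjugate:
  assumes h: "h \<in> carrier G" and g: "g \<in> carrier G"
  shows "(h \<otimes> g \<otimes> inv h) [^] (n::nat) = h \<otimes> g [^] n \<otimes> inv h"
proof (induction n)
  case 0
  then show ?case using h by simp
next
  case (Suc n)
  have "(h \<otimes> g \<otimes> inv h) [^] Suc n = (h \<otimes> g [^] n \<otimes> inv h) \<otimes> (h \<otimes> g \<otimes> inv h)"
    using Suc by simp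
  also have "\<dots> = h \<otimes> (g [^] n \<otimes> g) \<otimes> inv h"
    using h g by (simp add: m_assoc[symmetric]) (simp add: m_assoc)
  finally show ?case by simp
qed

end

section \<open>Paths in the quotient graph\<close>

definition cq_path :: "('a, 'b) monoid_scheme \<Rightarrow> 'a set \<Rightarrow> nat \<Rightarrow> 'a set \<Rightarrow> 'a set \<Rightarrow> bool" where
  "cq_path G S n C D \<longleftrightarrow> (\<exists>p. p 0 = C \<and> p n = D \<and>
     (\<forall>i\<le>n. p i \<in> conj_classes G) \<and> (\<forall>i<n. cq_adj G S (p i) (p (Suc i))))"

lemma cq_dist_le: "cq_path G S n C D \<Longrightarrow> cq_dist G S C D \<le> n"
  unfolding cq_dist_def cq_path_def by (rule Least_le)

lemma cq_path_cq_dist: "cq_path G S n C D \<Longrightarrow> cq_path G S (cq_dist G S C D) C D"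
  unfolding cq_dist_def cq_path_def by (rule LeastI)

lemma cq_path_refl: "C \<in> conj_classes G \<Longrightarrow> cq_path G S 0 C C"
  unfolding cq_path_def by (intro exI[of _ "\<lambda>_. C"]) simp

lemma cq_path_0_iff: "cq_path G S 0 C D \<longleftrightarrow> C = D \<and> C \<in> conj_classes G"
  unfolding cq_path_def by auto

lemma cq_path_SucE:
  assumes "cq_path G S (Suc n) C E"
  obtains D where "cq_path G S n C D" "cq_adj G S D E"
proof -
  obtain p where p: "p 0 = C" "p (Suc n) = E" "\<forall>i\<le>Suc n. p i \<in> conj_classes G"
    "\<forall>i<Suc n. cq_adj G S (p i) (p (Suc i))"
    using assms unfolding cq_path_def by blast
  then have "cq_path G S n C (p n)"
    unfolding cq_path_def by (intro exI[of _ p]) auto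
  then show ?thesis using that p by auto
qed

lemma cq_adj_sym: "cq_adj G S C D \<Longrightarrow> cq_adj G S D C"
  unfolding cq_adj_def by blast

lemma cq_path_sym:
  assumes "cq_path G S n C D"
  shows "cq_path G S n D C"
proof -
  obtain p where p: "p 0 = C" "p n = D" "\<forall>i\<le>n. p i \<in> conj_classes G"
    "\<forall>i<n. cq_adj G S (p i) (p (Suc i))"
    using assms unfolding cq_path_def by blast
  have "cq_adj G S (p (n - i)) (p (n - Suc i))" if "i < n" for i
  proof -
    have "n - i = Suc (n - Suc i)" "n - Suc i < n" using that by auto
    then show ?thesis using p(4) cq_adj_sym by metis
  qed
  then show ?thesis
    unfolding cq_path_def using p by (intro exI[of _ "\<lambda>i. p (n - i)"]) auto
qed

lemma cq_path_trans:
  assumes "cq_path G S a C D" "cq_path G S b D E"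
  shows "cq_path G S (a + b) C E"
proof -
  obtain p where p: "p 0 = C" "p a = D" "\<forall>i\<le>a. p i \<in> conj_classes G"
    "\<forall>i<a. cq_adj G S (p i) (p (Suc i))"
    using assms(1) unfolding cq_path_def by blast
  obtain r where r: "r 0 = D" "r b = E" "\<forall>i\<le>b. r i \<in> conj_classes G"
    "\<forall>i<b. cq_adj G S (r i) (r (Suc i))"
    using assms(2) unfolding cq_path_def by blast
  define t where "t i = (if i \<le> a then p i else r (i - a))" for i
  have "cq_adj G S (t i) (t (Suc i))" if i: "i < a + b" for i
  proof (cases "i < a")
    case True
    then show ?thesis using p(4) unfolding t_def by auto
  next
    case False
    then have "t i = r (i - a)" "t (Suc i) = r (Suc (i - a))" "i - a < b"
      using i p(2) r(1) unfolding t_def by (auto simp: Suc_diff_le)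
    then show ?thesis using r(4) by metis
  qed
  moreover have "\<forall>i\<le>a + b. t i \<in> conj_classes G"
    using p(3) r(3) unfolding t_def by auto
  moreover have "t 0 = C" "t (a + b) = E"
    using p r unfolding t_def by auto
  ultimately show ?thesis
    unfolding cq_path_def by blast
qed

definition translation_length_le :: "('a, 'b) monoid_scheme \<Rightarrow> 'a set \<Rightarrow> 'a \<Rightarrow> nat \<Rightarrow> bool" where
  "translation_length_le G S h n \<longleftrightarrow>
     (\<forall>a\<in>carrier G. cq_path G S n (conj_class G a) (conj_class G (h \<otimes>\<^bsub>G\<^esub> a)))"

context group
begin

lemma cq_path_edge:
  assumes "x \<in> carrier G" "y \<in> carrier G" "s \<in> S" "y = s \<otimes> x"
  shows "cq_path G S 1 (conj_class G x) (conj_class G y)"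
  unfolding cq_path_def
  using assms
  by (intro exI[of _ "\<lambda>i. if i = 0 then conj_class G x else conj_class G y"])
     (auto simp: cq_adj_def intro!: conj_class_in_conj_classes conj_class_self)

lemma translation_length_le_one: "translation_length_le G S \<one> 0"
  unfolding translation_length_le_def by (auto intro: cq_path_refl conj_class_in_conj_classes)

lemma translation_length_le_gen:
  assumes "S \<subseteq> carrier G" "s \<in> S"
  shows "translation_length_le G S s 1"
  unfolding translation_length_le_def using assms by (blast intro: cq_path_edge)

lemma translation_length_le_mult:
  assumes "translation_length_le G S h n" "translation_length_le G S k l"
    and "h \<in> carrier G" "k \<in> carrier G"
  shows "translation_length_le G S (h \<otimes> k) (l + n)"
  unfolding translation_length_le_def
proof
  fix a assume a: "a \<in> carrier G"
  have "cq_path G S l (conj_class G a) (conj_class G (k \<otimes> a))"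
    using assms(2) a unfolding translation_length_le_def by blast
  moreover have "cq_path G S n (conj_class G (k \<otimes> a)) (conj_class G (h \<otimes> (k \<otimes> a)))"
    using assms(1,4) a unfolding translation_length_le_def by blast
  ultimately show "cq_path G S (l + n) (conj_class G a) (conj_class G (h \<otimes> k \<otimes> a))"
    using assms a by (simp add: m_assoc cq_path_trans)
qed

lemma translation_length_le_inv:
  assumes "translation_length_le G S h n" "h \<in> carrier G"
  shows "translation_length_le G S (inv h) n"
  unfolding translation_length_le_def
proof
  fix a assume a: "a \<in> carrier G"
  have "cq_path G S n (conj_class G (inv h \<otimes> a)) (conj_class G (h \<otimes> (inv h \<otimes> a)))"
    using assms a unfolding translation_length_le_def by blast
  then show "cq_path G S n (conj_class G a) (conj_class G (inv h \<otimes> a))"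
    using assms a by (simp add: cq_path_sym)
qed

lemma translation_length_le_generate:
  assumes "S \<subseteq> carrier G" "h \<in> generate G S"
  shows "\<exists>n. translation_length_le G S h n"
  using assms(2)
proof (induction rule: generate.induct)
  case one
  then show ?case using translation_length_le_one by blast
next
  case (incl s)
  then show ?case using translation_length_le_gen assms(1) by blast
next
  case (inv s)
  then have "s \<in> carrier G" using assms(1) by blast
  then show ?case
    using translation_length_le_inv[OF translation_length_le_gen] inv assms(1) by blast
next
  case (eng h k)
  then show ?case
    using translation_length_le_mult generate_in_carrier assms(1) by blast
qed

lemma translation_length_le_nat_pow:
  assumes "translation_length_le G S h n" "h \<in> carrier G"
  shows "translation_length_le G S (h [^] (k::nat)) (k * n)"
proof (induction k)
  case 0
  then show ?case using translation_length_le_one by simp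
next
  case (Suc k)
  show ?case
    using translation_length_le_mult[OF Suc.IH assms(1)] assms(2) by (simp add: add.commute)
qed

lemma translation_length_le_int_pow:
  assumes "translation_length_le G S h n" "h \<in> carrier G"
  shows "translation_length_le G S (h [^] (k::int)) (nat \<bar>k\<bar> * n)"
proof (cases "k < 0")
  case True
  have "h [^] k = inv (h [^] nat (- k))"
    using True by (subst int_pow_def2) simp
  moreover have "nat \<bar>k\<bar> = nat (- k)" using True by simp
  ultimately show ?thesis
    using translation_length_le_inv translation_length_le_nat_pow assms by (metis nat_pow_closed)
next
  case False
  have "h [^] k = h [^] nat k"
    using False by (subst int_pow_def2) simp
  moreover have "nat \<bar>k\<bar> = nat k" using False by simp
  ultimately show ?thesis
    using translation_length_le_nat_pow assms by metis
qed

end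

section \<open>Homogeneous quasi-morphisms\<close>

definition defect_le :: "('a, 'b) monoid_scheme \<Rightarrow> ('a \<Rightarrow> real) \<Rightarrow> real \<Rightarrow> bool" where
  "defect_le G q D \<longleftrightarrow>
     (\<forall>g\<in>carrier G. \<forall>h\<in>carrier G. \<bar>q (g \<otimes>\<^bsub>G\<^esub> h) - q g - q h\<bar> \<le> D)"

lemma quasi_morphism_iff_defect_le: "quasi_morphism G q \<longleftrightarrow> (\<exists>D. defect_le G q D)"
  unfolding quasi_morphism_def defect_le_def ..

lemma eq_0_if_multiples_bounded:
  fixes x :: real
  assumes "\<And>n::nat. real n * \<bar>x\<bar> \<le> M"
  shows "x = 0"
proof (rule ccontr)
  assume "x \<noteq> 0"
  then obtain n :: nat where "M < real n * \<bar>x\<bar>"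
    using reals_Archimedean3[of "\<bar>x\<bar>"] by auto
  then show False using assms[of n] by simp
qed

context group
begin

lemma hqm_nat_pow:
  assumes "homogeneous_qm G q" "g \<in> carrier G"
  shows "q (g [^] (n::nat)) = real n * q g"
  using assms unfolding homogeneous_qm_def by (metis int_pow_int of_int_of_nat_eq)

lemma hqm_one: "homogeneous_qm G q \<Longrightarrow> q \<one> = 0"
  using hqm_nat_pow[of q \<one> 0] by simp

text \<open>The difference q (h g^n h^-1) - q (g^n) is bounded uniformly in n, but by homogeneity
  it equals n (q (h g h^-1) - q g).\<close>
lemma hqm_conj_invariant:
  assumes hq: "homogeneous_qm G q" and h: "h \<in> carrier G" and g: "g \<in> carrier G"
  shows "q (h \<otimes> g \<otimes> inv h) = q g"
proof -
  obtain D where D: "defect_le G q D"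
    using hq unfolding homogeneous_qm_def quasi_morphism_iff_defect_le by blast
  define t where "t = h \<otimes> g \<otimes> inv h"
  have t: "t \<in> carrier G" using h g unfolding t_def by simp
  have "real n * \<bar>q t - q g\<bar> \<le> 2 * D + \<bar>q h\<bar> + \<bar>q (inv h)\<bar>" for n
  proof -
    have gn: "g [^] n \<in> carrier G" "h \<otimes> g [^] n \<in> carrier G" using g h by simp_all
    have "\<bar>q (h \<otimes> g [^] n \<otimes> inv h) - q (h \<otimes> g [^] n) - q (inv h)\<bar> \<le> D"
      "\<bar>q (h \<otimes> g [^] n) - q h - q (g [^] n)\<bar> \<le> D"
      using D gn h unfolding defect_le_def by auto
    moreover have "real n * (q t - q g) = q (h \<otimes> g [^] n \<otimes> inv h) - q (g [^] n)"
      using hqm_nat_pow[OF hq t] hqm_nat_pow[OF hq g] nat_pow_conjugate[OF h g]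
      unfolding t_def by (simp add: right_diff_distrib)
    ultimately show ?thesis by (simp add: abs_mult[symmetric])
  qed
  then show ?thesis
    using eq_0_if_multiples_bounded unfolding t_def by fastforce
qed

lemma hqm_const_on_conj_classes:
  assumes "homogeneous_qm G q" "C \<in> conj_classes G" "u \<in> C" "v \<in> C"
  shows "q u = q v"
proof -
  obtain a where a: "a \<in> carrier G" "C = conj_class G a"
    using assms(2) unfolding conj_classes_def by blast
  have "q w = q a" if "w \<in> C" for w
    using that a hqm_conj_invariant[OF assms(1)] unfolding conj_class_def by auto
  then show ?thesis using assms(3,4) by simp
qed

lemma hqm_cq_adj_bound:
  assumes hq: "homogeneous_qm G q" and D: "defect_le G q D"
    and SG: "S \<subseteq> carrier G" and B: "\<forall>s\<in>S. \<bar>q s\<bar> \<le> B"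
    and adj: "cq_adj G S C E" and u: "u \<in> C" and v: "v \<in> E"
  shows "\<bar>q u - q v\<bar> \<le> B + D"
proof -
  obtain x y s where xy: "x \<in> C" "y \<in> E" "s \<in> S" "y = s \<otimes> x \<or> x = s \<otimes> y"
    and CE: "C \<in> conj_classes G" "E \<in> conj_classes G"
    using adj unfolding cq_adj_def by blast
  have "x \<in> carrier G" "y \<in> carrier G" "s \<in> carrier G"
    using xy CE SG conj_classes_subset_carrier by blast+
  then have "\<bar>q (s \<otimes> x) - q s - q x\<bar> \<le> D" "\<bar>q (s \<otimes> y) - q s - q y\<bar> \<le> D"
    using D unfolding defect_le_def by blast+
  moreover have "\<bar>q s\<bar> \<le> B" using B xy(3) by blast
  ultimately have "\<bar>q x - q y\<bar> \<le> B + D"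
    using xy(4) by auto
  moreover have "q u = q x" "q v = q y"
    using hqm_const_on_conj_classes[OF hq] CE u v xy(1,2) by blast+
  ultimately show ?thesis by simp
qed

lemma hqm_cq_path_bound:
  assumes hq: "homogeneous_qm G q" and D: "defect_le G q D"
    and SG: "S \<subseteq> carrier G" and B: "\<forall>s\<in>S. \<bar>q s\<bar> \<le> B"
    and "cq_path G S n C E" "u \<in> C" "v \<in> E"
  shows "\<bar>q u - q v\<bar> \<le> real n * (B + D)"
  using assms(5-7)
proof (induction n arbitrary: E v)
  case 0
  then have "C = E" "E \<in> conj_classes G"
    by (auto simp: cq_path_0_iff)
  then show ?case
    using hqm_const_on_conj_classes[OF hq, of E u v] 0 by simp
next
  case (Suc n)
  obtain E' where E': "cq_path G S n C E'" "cq_adj G S E' E"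
    using Suc.prems(1) by (rule cq_path_SucE)
  obtain w where w: "w \<in> E'"
    using E'(2) conj_classes_nonempty unfolding cq_adj_def by blast
  have "\<bar>q u - q w\<bar> \<le> real n * (B + D)"
    using Suc.IH E'(1) Suc.prems(2) w by blast
  moreover have "\<bar>q w - q v\<bar> \<le> B + D"
    using hqm_cq_adj_bound[OF hq D SG B E'(2) w Suc.prems(3)] .
  ultimately show ?case by (simp add: algebra_simps)
qed

end

section \<open>Dual bases of linearly independent functions\<close>

definition lincomb_on :: "'a set \<Rightarrow> (nat \<Rightarrow> 'a \<Rightarrow> real) \<Rightarrow> nat \<Rightarrow> ('a \<Rightarrow> real) \<Rightarrow> bool" where
  "lincomb_on A q n p \<longleftrightarrow> (\<exists>c. \<forall>h\<in>A. p h = (\<Sum>i<n. c i * q i h))"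

definition independent_on :: "'a set \<Rightarrow> (nat \<Rightarrow> 'a \<Rightarrow> real) \<Rightarrow> nat \<Rightarrow> bool" where
  "independent_on A q n \<longleftrightarrow> (\<forall>c. (\<forall>h\<in>A. (\<Sum>i<n. c i * q i h) = 0) \<longrightarrow> (\<forall>i<n. c i = 0))"

lemma lincomb_on_cong:
  "lincomb_on A q n p \<Longrightarrow> (\<And>h. h \<in> A \<Longrightarrow> p h = p' h) \<Longrightarrow> lincomb_on A q n p'"
  unfolding lincomb_on_def by metis

lemma lincomb_on_zero: "lincomb_on A q n (\<lambda>h. 0)"
  unfolding lincomb_on_def by (intro exI[of _ "\<lambda>i. 0"]) simp

lemma lincomb_on_add:
  assumes "lincomb_on A q n p" "lincomb_on A q n p'"
  shows "lincomb_on A q n (\<lambda>h. p h + p' h)"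
proof -
  obtain c c' where "\<forall>h\<in>A. p h = (\<Sum>i<n. c i * q i h)" "\<forall>h\<in>A. p' h = (\<Sum>i<n. c' i * q i h)"
    using assms unfolding lincomb_on_def by blast
  then have "\<forall>h\<in>A. p h + p' h = (\<Sum>i<n. (c i + c' i) * q i h)"
    by (simp add: distrib_right sum.distrib)
  then show ?thesis unfolding lincomb_on_def by (rule exI[where x = "\<lambda>i. c i + c' i"])
qed

lemma lincomb_on_scale:
  assumes "lincomb_on A q n p"
  shows "lincomb_on A q n (\<lambda>h. a * p h)"
proof -
  obtain c where "\<forall>h\<in>A. p h = (\<Sum>i<n. c i * q i h)"
    using assms unfolding lincomb_on_def by blast
  then have "\<forall>h\<in>A. a * p h = (\<Sum>i<n. (a * c i) * q i h)"
    by (simp add: sum_distrib_left mult.assoc)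
  then show ?thesis unfolding lincomb_on_def by (rule exI[where x = "\<lambda>i. a * c i"])
qed

lemma lincomb_on_diff:
  assumes "lincomb_on A q n p" "lincomb_on A q n p'"
  shows "lincomb_on A q n (\<lambda>h. p h - p' h)"
  using lincomb_on_add[OF assms(1) lincomb_on_scale[OF assms(2), of "-1"]] by simp

lemma lincomb_on_sum:
  assumes "\<And>k. k \<in> I \<Longrightarrow> lincomb_on A q n (P k)"
  shows "lincomb_on A q n (\<lambda>h. \<Sum>k\<in>I. a k * P k h)"
  using assms
proof (induction I rule: infinite_finite_induct)
  case (insert k I)
  then have "lincomb_on A q n (\<lambda>h. a k * P k h + (\<Sum>k\<in>I. a k * P k h))"
    by (intro lincomb_on_add lincomb_on_scale) auto
  then show ?case
    using insert.hyps by simp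
qed (simp_all add: lincomb_on_zero)

lemma lincomb_on_Suc:
  assumes "lincomb_on A q n p"
  shows "lincomb_on A q (Suc n) p"
proof -
  obtain c where "\<forall>h\<in>A. p h = (\<Sum>i<n. c i * q i h)"
    using assms unfolding lincomb_on_def by blast
  then have "\<forall>h\<in>A. p h = (\<Sum>i<Suc n. (c(n := 0)) i * q i h)"
    by simp
  then show ?thesis unfolding lincomb_on_def by (rule exI[where x = "c(n := 0)"])
qed

lemma lincomb_on_basis: "lincomb_on A q (Suc n) (q n)"
  unfolding lincomb_on_def by (intro exI[of _ "\<lambda>i. if i = n then 1 else 0"]) simp

lemma independent_on_Suc_imp:
  assumes "independent_on A q (Suc n)"
  shows "independent_on A q n"
  unfolding independent_on_def
proof (rule allI, rule impI)
  fix c assume c: "\<forall>h\<in>A. (\<Sum>i<n. c i * q i h) = 0"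
  define c' where "c' = c(n := 0)"
  have "\<forall>h\<in>A. (\<Sum>i<Suc n. c' i * q i h) = 0"
    using c unfolding c'_def by simp
  then have "\<forall>i<Suc n. c' i = 0"
    using assms unfolding independent_on_def by blast
  then show "\<forall>i<n. c i = 0"
    unfolding c'_def by (metis fun_upd_other less_SucI less_irrefl)
qed

lemma not_lincomb_on_if_independent_on:
  assumes "independent_on A q (Suc n)"
  shows "\<not> lincomb_on A q n (q n)"
proof
  assume "lincomb_on A q n (q n)"
  then obtain c where c: "\<forall>h\<in>A. q n h = (\<Sum>i<n. c i * q i h)"
    unfolding lincomb_on_def by blast
  define c' where "c' = c(n := -1)"
  have "\<forall>h\<in>A. (\<Sum>i<Suc n. c' i * q i h) = 0"
    using c unfolding c'_def by simp
  then have "c' n = 0"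
    using assms unfolding independent_on_def by blast
  then show False unfolding c'_def by simp
qed

lemma dual_functions_exist:
  assumes "independent_on A q n"
  shows "\<exists>g P. (\<forall>j<n. g j \<in> A) \<and> (\<forall>k<n. lincomb_on A q n (P k)) \<and>
           (\<forall>k<n. \<forall>j<n. P k (g j) = (if k = j then 1 else 0))"
  using assms
proof (induction n)
  case 0
  then show ?case by simp
next
  case (Suc n)
  obtain g P where g: "\<forall>j<n. g j \<in> A" and P: "\<forall>k<n. lincomb_on A q n (P k)"
    and dual: "\<forall>k<n. \<forall>j<n. P k (g j) = (if k = j then 1 else 0)"
    using Suc.IH independent_on_Suc_imp[OF Suc.prems] by blast
  define r where "r h = q n h - (\<Sum>k<n. q n (g k) * P k h)" for h
  have r_g: "r (g j) = 0" if "j < n" for j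
  proof -
    have "(\<Sum>k<n. q n (g k) * P k (g j)) = (\<Sum>k<n. if k = j then q n (g k) else 0)"
      using dual that by (intro sum.cong) auto
    then show ?thesis unfolding r_def using that by simp
  qed
  have proj: "lincomb_on A q n (\<lambda>h. \<Sum>k<n. q n (g k) * P k h)"
    using P by (intro lincomb_on_sum) auto
  have "\<exists>h0\<in>A. r h0 \<noteq> 0"
  proof (rule ccontr)
    assume "\<not> (\<exists>h0\<in>A. r h0 \<noteq> 0)"
    then have "lincomb_on A q n (q n)"
      using lincomb_on_cong[OF proj, of "q n"] unfolding r_def by auto
    then show False
      using not_lincomb_on_if_independent_on[OF Suc.prems] by blast
  qed
  then obtain h0 where h0: "h0 \<in> A" "r h0 \<noteq> 0" by blast
  define Pn where "Pn h = inverse (r h0) * r h" for h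
  define P' where "P' k = (if k = n then Pn else (\<lambda>h. P k h - P k h0 * Pn h))" for k
  have "lincomb_on A q (Suc n) r"
    unfolding r_def[abs_def] using lincomb_on_diff[OF lincomb_on_basis lincomb_on_Suc[OF proj]] .
  then have Pn: "lincomb_on A q (Suc n) Pn"
    unfolding Pn_def[abs_def] by (rule lincomb_on_scale)
  have "\<forall>k<Suc n. lincomb_on A q (Suc n) (P' k)"
  proof (intro allI impI)
    fix k assume k: "k < Suc n"
    show "lincomb_on A q (Suc n) (P' k)"
    proof (cases "k = n")
      case True
      then show ?thesis using Pn unfolding P'_def by simp
    next
      case False
      then have "lincomb_on A q (Suc n) (P k)"
        using P k lincomb_on_Suc less_Suc_eq by blast
      then show ?thesis
        using False lincomb_on_diff[OF _ lincomb_on_scale[OF Pn, of "P k h0"]] unfolding P'_def by simp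
    qed
  qed
  moreover have "\<forall>j<Suc n. (g(n := h0)) j \<in> A"
    using g h0 by (simp add: less_Suc_eq)
  moreover have "Pn h0 = 1" "\<forall>j<n. Pn (g j) = 0"
    using h0 r_g unfolding Pn_def by simp_all
  then have "\<forall>k<Suc n. \<forall>j<Suc n. P' k ((g(n := h0)) j) = (if k = j then 1 else 0)"
    using dual unfolding P'_def by (auto simp: less_Suc_eq)
  ultimately show ?case by blast
qed

lemma dual_basis_exists:
  assumes "independent_on A q n"
  obtains g c where "\<forall>j<n. g j \<in> A"
    and "\<forall>k<n. \<forall>j<n. (\<Sum>i<n. c k i * q i (g j)) = (if k = j then 1 else 0)"
proof -
  obtain g P where g: "\<forall>j<n. g j \<in> A" and P: "\<forall>k<n. lincomb_on A q n (P k)"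
    and dual: "\<forall>k<n. \<forall>j<n. P k (g j) = (if k = j then 1 else 0)"
    using dual_functions_exist[OF assms] by blast
  obtain c where "\<forall>k<n. \<forall>h\<in>A. P k h = (\<Sum>i<n. c k i * q i h)"
    using P unfolding lincomb_on_def by metis
  then show ?thesis
    using that g dual by simp
qed

lemma sum_left_inverse_apply:
  fixes c Q :: "nat \<Rightarrow> nat \<Rightarrow> real"
  assumes inv: "\<forall>k<n. \<forall>j<n. (\<Sum>i<n. c k i * Q i j) = (if k = j then 1 else 0)" and k: "k < n"
  shows "(\<Sum>i<n. c k i * (\<Sum>j<n. Q i j * z j)) = z k"
proof -
  have "(\<Sum>i<n. c k i * (\<Sum>j<n. Q i j * z j)) = (\<Sum>i<n. \<Sum>j<n. c k i * Q i j * z j)"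
    by (simp add: sum_distrib_left mult.assoc)
  also have "\<dots> = (\<Sum>j<n. \<Sum>i<n. c k i * Q i j * z j)"
    by (rule sum.swap)
  also have "\<dots> = (\<Sum>j<n. (\<Sum>i<n. c k i * Q i j) * z j)"
    by (simp add: sum_distrib_right)
  also have "\<dots> = (\<Sum>j<n. if k = j then z j else 0)"
    using inv k by (intro sum.cong) auto
  also have "\<dots> = z k"
    using k by simp
  finally show ?thesis .
qed

section \<open>The embedding of Z^m\<close>

primrec pow_prod :: "('a, 'b) monoid_scheme \<Rightarrow> (nat \<Rightarrow> 'a) \<Rightarrow> (nat \<Rightarrow> int) \<Rightarrow> nat \<Rightarrow> 'a" where
  "pow_prod G g x 0 = \<one>\<^bsub>G\<^esub>"
| "pow_prod G g x (Suc n) = pow_prod G g x n \<otimes>\<^bsub>G\<^esub> g n [^]\<^bsub>G\<^esub> x n"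

context group
begin

lemma pow_prod_closed: "\<forall>j<n. g j \<in> carrier G \<Longrightarrow> pow_prod G g x n \<in> carrier G"
  by (induction n) auto

lemma hqm_pow_prod_estimate:
  assumes hq: "homogeneous_qm G q" and D: "defect_le G q D" and g: "\<forall>j<n. g j \<in> carrier G"
  shows "\<bar>q (pow_prod G g x n) - (\<Sum>j<n. of_int (x j) * q (g j))\<bar> \<le> real n * D"
  using g
proof (induction n)
  case 0
  then show ?case using hqm_one[OF hq] by simp
next
  case (Suc n)
  then have "pow_prod G g x n \<in> carrier G" "g n [^] x n \<in> carrier G"
    by (simp_all add: pow_prod_closed)
  then have "\<bar>q (pow_prod G g x (Suc n)) - q (pow_prod G g x n) - q (g n [^] x n)\<bar> \<le> D"
    using D unfolding defect_le_def by simp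
  moreover have "q (g n [^] x n) = of_int (x n) * q (g n)"
    using hq Suc.prems unfolding homogeneous_qm_def by simp
  ultimately show ?case
    using Suc by (simp add: algebra_simps)
qed

lemma pow_prod_cq_path:
  assumes g: "\<forall>j<n. g j \<in> carrier G" and l: "\<forall>j<n. translation_length_le G S (g j) (l j)"
    and a: "a \<in> carrier G"
  shows "cq_path G S (\<Sum>j<n. nat \<bar>x j - y j\<bar> * l j)
           (conj_class G (pow_prod G g x n \<otimes> a)) (conj_class G (pow_prod G g y n \<otimes> a))"
  using g l a
proof (induction n arbitrary: a)
  case 0
  then show ?case by (simp add: cq_path_refl conj_class_in_conj_classes)
next
  case (Suc n)
  have gn: "g n \<in> carrier G" and px: "pow_prod G g x n \<in> carrier G"
    and py: "pow_prod G g y n \<in> carrier G"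
    using Suc.prems by (simp_all add: pow_prod_closed)
  \<comment> \<open>Rotating the product cyclically keeps its class, so the last factor can be adjusted
    in front.\<close>
  define u where "u = g n [^] x n \<otimes> a"
  have u: "u \<in> carrier G" using gn Suc.prems(3) unfolding u_def by simp
  have "cq_path G S (\<Sum>j<n. nat \<bar>x j - y j\<bar> * l j)
          (conj_class G (pow_prod G g x n \<otimes> u)) (conj_class G (pow_prod G g y n \<otimes> u))"
    using Suc u by simp
  moreover have "pow_prod G g x n \<otimes> u = pow_prod G g x (Suc n) \<otimes> a"
    using gn px Suc.prems(3) unfolding u_def by (simp add: m_assoc)
  moreover have "conj_class G (pow_prod G g y n \<otimes> u) = conj_class G (u \<otimes> pow_prod G g y n)"
    using py u by (rule conj_class_mult_commute)
  moreover have "cq_path G S (nat \<bar>x n - y n\<bar> * l n) (conj_class G (u \<otimes> pow_prod G g y n))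
      (conj_class G (g n [^] (y n - x n) \<otimes> (u \<otimes> pow_prod G g y n)))"
    using translation_length_le_int_pow[of S "g n" "l n" "y n - x n"] Suc.prems gn py u
    unfolding translation_length_le_def by (simp add: abs_minus_commute)
  moreover have "g n [^] (y n - x n) \<otimes> (u \<otimes> pow_prod G g y n) = (g n [^] y n \<otimes> a) \<otimes> pow_prod G g y n"
    using int_pow_mult[OF gn, of "y n - x n" "x n"] gn py Suc.prems(3)
    unfolding u_def by (simp add: m_assoc)
  moreover have "conj_class G ((g n [^] y n \<otimes> a) \<otimes> pow_prod G g y n)
      = conj_class G (pow_prod G g y (Suc n) \<otimes> a)"
    using conj_class_mult_commute[of "g n [^] y n \<otimes> a" "pow_prod G g y n"] gn py Suc.prems(3)
    by (simp add: m_assoc)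
  ultimately show ?case
    using cq_path_trans by fastforce
qed

lemma cq_dist_pow_prod_le:
  assumes g: "\<forall>j<m. g j \<in> carrier G" and l: "\<forall>j<m. translation_length_le G S (g j) (l j)"
  shows "real (cq_dist G S (conj_class G (pow_prod G g x m)) (conj_class G (pow_prod G g y m)))
           \<le> (\<Sum>j<m. real (l j)) * of_int (l1_dist m x y)"
proof -
  have "cq_dist G S (conj_class G (pow_prod G g x m)) (conj_class G (pow_prod G g y m))
          \<le> (\<Sum>j<m. nat \<bar>x j - y j\<bar> * l j)"
    using cq_dist_le[OF pow_prod_cq_path[OF g l one_closed]] g by (simp add: pow_prod_closed)
  also have "real \<dots> \<le> (\<Sum>j<m. of_int (l1_dist m x y) * real (l j))"
    unfolding of_nat_sum
  proof (intro sum_mono)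
    fix j assume "j \<in> {..<m}"
    then have "\<bar>x j - y j\<bar> \<le> l1_dist m x y"
      unfolding l1_dist_def by (intro member_le_sum) auto
    then show "real (nat \<bar>x j - y j\<bar> * l j) \<le> of_int (l1_dist m x y) * real (l j)"
      by (simp add: mult_right_mono)
  qed
  finally show ?thesis
    by (simp add: sum_distrib_left mult.commute)
qed

lemma l1_dist_le_cq_path:
  assumes hq: "\<forall>i<m. homogeneous_qm G (q i)" and D: "\<forall>i<m. defect_le G (q i) D"
    and SG: "S \<subseteq> carrier G" and B: "\<forall>i<m. \<forall>s\<in>S. \<bar>q i s\<bar> \<le> B"
    and g: "\<forall>j<m. g j \<in> carrier G"
    and dual: "\<forall>k<m. \<forall>j<m. (\<Sum>i<m. c k i * q i (g j)) = (if k = j then 1 else 0)"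
    and path: "cq_path G S d (conj_class G (pow_prod G g x m)) (conj_class G (pow_prod G g y m))"
  shows "of_int (l1_dist m x y) \<le> (\<Sum>k<m. \<Sum>i<m. \<bar>c k i\<bar>) * (2 * real m * D + real d * (B + D))"
proof -
  define T where "T = 2 * real m * D + real d * (B + D)"
  have px: "pow_prod G g x m \<in> conj_class G (pow_prod G g x m)"
    and py: "pow_prod G g y m \<in> conj_class G (pow_prod G g y m)"
    using g by (simp_all add: conj_class_self pow_prod_closed)
  have coord: "\<bar>\<Sum>j<m. q i (g j) * of_int (x j - y j)\<bar> \<le> T" if i: "i < m" for i
  proof -
    have "\<bar>q i (pow_prod G g x m) - q i (pow_prod G g y m)\<bar> \<le> real d * (B + D)"
      using hqm_cq_path_bound[OF _ _ SG _ path px py] hq D B i by blast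
    moreover have "\<bar>q i (pow_prod G g x m) - (\<Sum>j<m. of_int (x j) * q i (g j))\<bar> \<le> real m * D"
      "\<bar>q i (pow_prod G g y m) - (\<Sum>j<m. of_int (y j) * q i (g j))\<bar> \<le> real m * D"
      using hqm_pow_prod_estimate hq D g i by blast+
    moreover have "(\<Sum>j<m. q i (g j) * of_int (x j - y j))
        = (\<Sum>j<m. of_int (x j) * q i (g j)) - (\<Sum>j<m. of_int (y j) * q i (g j))"
      by (simp add: algebra_simps sum_subtractf)
    ultimately show ?thesis
      unfolding T_def by linarith
  qed
  have "\<bar>of_int (x k - y k)\<bar> \<le> (\<Sum>i<m. \<bar>c k i\<bar>) * T" if k: "k < m" for k
  proof -
    have "\<bar>of_int (x k - y k)\<bar> = \<bar>\<Sum>i<m. c k i * (\<Sum>j<m. q i (g j) * of_int (x j - y j))\<bar>"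
      using sum_left_inverse_apply[OF dual k, of "\<lambda>j. of_int (x j - y j)"] by simp
    also have "\<dots> \<le> (\<Sum>i<m. \<bar>c k i\<bar> * T)"
      using coord by (auto intro!: order_trans[OF sum_abs] sum_mono simp: abs_mult mult_left_mono)
    finally show ?thesis
      by (simp add: sum_distrib_right)
  qed
  then have "(\<Sum>k<m. \<bar>of_int (x k - y k)\<bar>) \<le> (\<Sum>k<m. (\<Sum>i<m. \<bar>c k i\<bar>) * T)"
    by (intro sum_mono) auto
  then show ?thesis
    unfolding l1_dist_def T_def by (simp add: sum_distrib_right)
qed

end

lemma uniform_bound_exists:
  fixes P :: "nat \<Rightarrow> real \<Rightarrow> bool"
  assumes "\<forall>i<m. \<exists>b. P i b" and mono: "\<And>i b b'. P i b \<Longrightarrow> b \<le> b' \<Longrightarrow> P i b'"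
  obtains b where "b \<ge> 0" "\<forall>i<m. P i b"
proof -
  obtain b where b: "\<forall>i<m. P i (b i)"
    using assms(1) by metis
  have "b i \<le> (\<Sum>k<m. \<bar>b k\<bar>)" if "i < m" for i
    using that member_le_sum[of i "{..<m}" "\<lambda>k. \<bar>b k\<bar>"] by simp
  then have "\<forall>i<m. P i (\<Sum>k<m. \<bar>b k\<bar>)"
    using b mono by blast
  moreover have "(\<Sum>k<m. \<bar>b k\<bar>) \<ge> 0"
    by (simp add: sum_nonneg)
  ultimately show ?thesis
    using that by blast
qed

lemma quasi_isometry_constants:
  fixes l d a b L :: real
  assumes "l \<le> a + d * b" "d \<le> L * l" "a \<ge> 0" "b \<ge> 0" "L \<ge> 0" "l \<ge> 0" "d \<ge> 0"
  shows "l / (b + L + 1) - a \<le> d \<and> d \<le> (b + L + 1) * l + a"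
proof
  have "a + d * b \<le> (d + a) * (b + L + 1)"
    using assms by (simp add: algebra_simps add_increasing mult_nonneg_nonneg)
  then have "l / (b + L + 1) \<le> d + a"
    using assms by (simp add: pos_divide_le_eq add_pos_nonneg)
  then show "l / (b + L + 1) - a \<le> d"
    by simp
  show "d \<le> (b + L + 1) * l + a"
    using assms by (smt (verit) mult_right_mono)
qed

theorem mainTheorem3:
  fixes G :: "('a, 'b) monoid_scheme" and S :: "'a set" and m :: nat
    and q :: "nat \<Rightarrow> 'a \<Rightarrow> real"
  assumes "group G"
    and "S \<subseteq> carrier G"
    and "conj_invariant G S"
    and "generate G S = carrier G"
    and "\<forall>i<m. homogeneous_qm G (q i)"
    and "\<forall>c :: nat \<Rightarrow> real. (\<forall>g\<in>carrier G. (\<Sum>i<m. c i * q i g) = 0) \<longrightarrow> (\<forall>i<m. c i = 0)"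
    and "\<forall>i<m. \<exists>B. \<forall>s\<in>S. \<bar>q i s\<bar> \<le> B"
  shows "\<exists>f. f \<in> Zm m \<rightarrow> conj_classes G \<and>
           (\<exists>K C. K \<ge> 1 \<and> C \<ge> 0 \<and>
             (\<forall>x\<in>Zm m. \<forall>y\<in>Zm m.
                real_of_int (l1_dist m x y) / K - C \<le> real (cq_dist G S (f x) (f y)) \<and>
                real (cq_dist G S (f x) (f y)) \<le> K * real_of_int (l1_dist m x y) + C))"
proof -
  interpret group G by (rule assms(1))
  have "independent_on (carrier G) q m"
    using assms(6) unfolding independent_on_def .
  then obtain g c where g: "\<forall>j<m. g j \<in> carrier G"
    and dual: "\<forall>k<m. \<forall>j<m. (\<Sum>i<m. c k i * q i (g j)) = (if k = j then 1 else 0)"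
    by (rule dual_basis_exists)
  obtain D where D: "D \<ge> 0" "\<forall>i<m. defect_le G (q i) D"
    by (rule uniform_bound_exists[of m "\<lambda>i. defect_le G (q i)"])
      (use assms(5) in \<open>force simp: homogeneous_qm_def quasi_morphism_iff_defect_le defect_le_def\<close>)+
  obtain B where B: "B \<ge> 0" "\<forall>i<m. \<forall>s\<in>S. \<bar>q i s\<bar> \<le> B"
    by (rule uniform_bound_exists[of m "\<lambda>i b. \<forall>s\<in>S. \<bar>q i s\<bar> \<le> b"]) (use assms(7) in force)+
  have "\<forall>j<m. \<exists>n. translation_length_le G S (g j) n"
    using translation_length_le_generate[OF assms(2)] assms(4) g by simp
  then obtain l where l: "\<forall>j<m. translation_length_le G S (g j) (l j)"
    by metis
  define f where "f x = conj_class G (pow_prod G g x m)" for x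
  define Cn where "Cn = (\<Sum>k<m. \<Sum>i<m. \<bar>c k i\<bar>)"
  define L where "L = (\<Sum>j<m. real (l j))"
  have bounds: "of_int (l1_dist m x y) / (Cn * (B + D) + L + 1) - Cn * (2 * real m * D)
        \<le> real (cq_dist G S (f x) (f y)) \<and>
      real (cq_dist G S (f x) (f y)) \<le> (Cn * (B + D) + L + 1) * of_int (l1_dist m x y) + Cn * (2 * real m * D)"
    for x y
  proof (rule quasi_isometry_constants)
    have "cq_path G S (cq_dist G S (f x) (f y)) (f x) (f y)"
      using cq_path_cq_dist[OF pow_prod_cq_path[OF g l one_closed]] g
      by (simp add: f_def pow_prod_closed)
    then have "of_int (l1_dist m x y) \<le> Cn * (2 * real m * D + real (cq_dist G S (f x) (f y)) * (B + D))"
      unfolding Cn_def f_def by (rule l1_dist_le_cq_path[OF assms(5) D(2) assms(2) B(2) g dual])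
    then show "of_int (l1_dist m x y) \<le> Cn * (2 * real m * D) + real (cq_dist G S (f x) (f y)) * (Cn * (B + D))"
      by (simp add: algebra_simps)
    show "real (cq_dist G S (f x) (f y)) \<le> L * of_int (l1_dist m x y)"
      using cq_dist_pow_prod_le[OF g l] unfolding f_def L_def .
  qed (auto simp: Cn_def L_def l1_dist_def D B sum_nonneg)
  moreover have "f \<in> Zm m \<rightarrow> conj_classes G"
    unfolding f_def using g by (simp add: conj_class_in_conj_classes pow_prod_closed)
  moreover have "Cn * (B + D) + L + 1 \<ge> 1" "Cn * (2 * real m * D) \<ge> 0"
    using B D by (simp_all add: Cn_def L_def sum_nonneg)
  ultimately show ?thesis by blast
qed

end
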